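(* There exists a topological dynamical system $(X,T)$, with $X$ containing at least two points, such that the whole space $X$ is a Banach scrambled set.
   Context: A topological dynamical system $(X,T)$ consists of a non-empty compact metric space $(X,d)$ and a continuous map $T:X\to X$. $\mathbb{Z}_+$ denotes the non-negative integers. A set $F\subset\mathbb{Z}_+$ has Banach density one if for every $\lambda<1$ there is $N\ge1$ such that $\#(F\cap I)\ge\lambda\,\#(I)$ for every interval $I\subset\mathbb{Z}_+$ of integers with $\#(I)\ge N$. A pair $(x,y)\in X^2$ is Banach proximal if for every $\varepsilon>0$ the set $\{n\in\mathbb{Z}_+: d(T^nx,T^ny)<\varepsilon\}$ has Banach density one. A pair is asymptotic if $\lim_{n\to\infty}d(T^nx,T^ny)=0$. A subset $S\subset X$ with at least two points is Banach scrambled if every pair of distinct points $x,y\in S$ is Banach proximal but not asymptotic. *)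

theory Defs
  imports "HOL-Analysis.Analysis"
begin

definition banach_density_one :: "nat set \<Rightarrow> bool" where
  "banach_density_one F \<longleftrightarrow>
     (\<forall>l::real. l < 1 \<longrightarrow> (\<exists>N\<ge>1. \<forall>a b::nat. a \<le> b \<longrightarrow> card {a..b} \<ge> N \<longrightarrow>
         real (card (F \<inter> {a..b})) \<ge> l * real (card {a..b})))"

definition tds :: "'a set \<Rightarrow> ('a \<Rightarrow> 'a \<Rightarrow> real) \<Rightarrow> ('a \<Rightarrow> 'a) \<Rightarrow> bool" where
  "tds X d T \<longleftrightarrow> X \<noteq> {} \<and> Metric_space X d \<and>
     compact_space (Metric_space.mtopology X d) \<and>
     continuous_map (Metric_space.mtopology X d) (Metric_space.mtopology X d) T"

definition banach_proximal :: "('a \<Rightarrow> 'a \<Rightarrow> real) \<Rightarrow> ('a \<Rightarrow> 'a) \<Rightarrow> 'a \<Rightarrow> 'a \<Rightarrow> bool" where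
  "banach_proximal d T x y \<longleftrightarrow>
     (\<forall>e>0. banach_density_one {n. d ((T ^^ n) x) ((T ^^ n) y) < e})"

definition asymptotic :: "('a \<Rightarrow> 'a \<Rightarrow> real) \<Rightarrow> ('a \<Rightarrow> 'a) \<Rightarrow> 'a \<Rightarrow> 'a \<Rightarrow> bool" where
  "asymptotic d T x y \<longleftrightarrow> ((\<lambda>n. d ((T ^^ n) x) ((T ^^ n) y)) \<longlonglongrightarrow> 0)"

definition banach_scrambled :: "('a \<Rightarrow> 'a \<Rightarrow> real) \<Rightarrow> ('a \<Rightarrow> 'a) \<Rightarrow> 'a set \<Rightarrow> bool" where
  "banach_scrambled d T S \<longleftrightarrow> (\<exists>x\<in>S. \<exists>y\<in>S. x \<noteq> y) \<and>
     (\<forall>x\<in>S. \<forall>y\<in>S. x \<noteq> y \<longrightarrow> banach_proximal d T x y \<and> \<not> asymptotic d T x y)"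

end

theory Submission
  imports Defs
begin

text \<open>
  Let \<open>W n\<close> be the product over the ternary digits of \<open>n\<close> of \<open>1\<close>, \<open>0\<close>, \<open>1/2\<close> for the digits
  \<open>0\<close>, \<open>1\<close>, \<open>2\<close> (and \<open>W = 0\<close> on negative integers), so \<open>W\<close> lives on the integer Cantor set and is
  multiplicative across blocks of ternary digits. The space consists of the zero sequence and the
  sequences \<open>i \<mapsto> 2\<^sup>-\<^sup>k W (m + i)\<close> under the shift. At most \<open>2\<^sup>s\<close> of any \<open>3\<^sup>s\<close> consecutive integers
  carry \<open>W\<close>, so every point vanishes outside a set of Banach density zero and any two points are
  Banach proximal; distinct points are kept apart near the peaks \<open>2 \<cdot> 3\<^sup>t - m\<close>, so no pair is
  asymptotic. The space is closed in \<open>[0,1]\<^sup>\<nat>\<close>, hence compact: in a limit that is nonzero somewhere,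
  the weights at a fixed coordinate are bounded below, which bounds the number of digits \<open>2\<close>, and
  self-similarity of \<open>W\<close> then forces the normalised local patterns to converge to the pattern of \<open>W\<close>
  around a single integer, so the limit is again a scaled shift of \<open>W\<close>. This countable compact
  system is finally carried over to a subset of the real line by enumerating its points.
\<close>

section \<open>The ternary Cantor weight\<close>

definition digit_weight :: "int \<Rightarrow> real" where
  "digit_weight d = (if d = 0 then 1 else if d = 1 then 0 else 1/2)"

function cantor_weight :: "int \<Rightarrow> real" where
  "cantor_weight z =
     (if z < 0 then 0 else if z = 0 then 1 else digit_weight (z mod 3) * cantor_weight (z div 3))"
  by auto
termination by (relation "Wellfounded.measure nat") auto

declare cantor_weight.simps [simp del]

lemma cantor_weight_0 [simp]: "cantor_weight 0 = 1"
  by (simp add: cantor_weight.simps)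

lemma cantor_weight_neg: "z < 0 \<Longrightarrow> cantor_weight z = 0"
  by (simp add: cantor_weight.simps)

lemma cantor_weight_digit:
  assumes "0 \<le> d" "d < 3"
  shows "cantor_weight (3 * z + d) = digit_weight d * cantor_weight z"
proof (cases "3 * z + d > 0")
  case True
  then show ?thesis
    using assms by (subst cantor_weight.simps) auto
next
  case False
  then consider "z = 0" "d = 0" | "z < 0" using assms by linarith
  then show ?thesis
    using assms by cases (auto simp: digit_weight_def cantor_weight_neg)
qed

lemma cantor_weight_mult:
  assumes "0 \<le> r" "r < 3 ^ p"
  shows "cantor_weight (3 ^ p * w + r) = cantor_weight w * cantor_weight r"
  using assms
proof (induction p arbitrary: r)
  case 0
  then have "r = 0" by simp
  then show ?case by simp
next
  case (Suc p)
  have low: "0 \<le> r mod 3" "r mod 3 < 3" and high: "0 \<le> r div 3" "r div 3 < 3 ^ p"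
    using Suc.prems by auto
  have "3 ^ Suc p * w + r = 3 * (3 ^ p * w + r div 3) + r mod 3"
    by simp
  then have "cantor_weight (3 ^ Suc p * w + r)
      = digit_weight (r mod 3) * (cantor_weight w * cantor_weight (r div 3))"
    by (simp only: cantor_weight_digit[OF low] Suc.IH[OF high])
  also have "\<dots> = cantor_weight w * cantor_weight (3 * (r div 3) + r mod 3)"
    by (simp only: cantor_weight_digit[OF low]) simp
  finally show ?case by simp
qed

lemma cantor_weight_1 [simp]: "cantor_weight 1 = 0"
  using cantor_weight_digit[of 1 0] by (simp add: digit_weight_def)

lemma cantor_weight_3_mult_plus_1: "cantor_weight (3 * w + 1) = 0"
  using cantor_weight_digit[of 1 w] by (simp add: digit_weight_def)

lemma cantor_weight_3_mult_plus_2: "cantor_weight (3 * w + 2) = cantor_weight w / 2"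
  using cantor_weight_digit[of 2 w] by (simp add: digit_weight_def)

lemma cantor_weight_pow3_mult: "cantor_weight (3 ^ p * w) = cantor_weight w"
  using cantor_weight_mult[of 0 p w] by simp

lemma cantor_weight_2_mult_pow3: "cantor_weight (2 * 3 ^ p) = 1/2"
  using cantor_weight_pow3_mult[of p 2] cantor_weight_3_mult_plus_2[of 0] by (simp add: mult.commute)

lemma cantor_weight_nonneg: "0 \<le> cantor_weight z"
proof (induction z rule: cantor_weight.induct)
  case (1 z)
  then show ?case
    by (subst cantor_weight.simps) (simp add: digit_weight_def)
qed

lemma cantor_weight_le_1: "cantor_weight z \<le> 1"
proof (induction z rule: cantor_weight.induct)
  case (1 z)
  have "0 \<le> digit_weight (z mod 3)" "digit_weight (z mod 3) \<le> 1"
    by (auto simp: digit_weight_def)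
  with 1 show ?case
    by (subst cantor_weight.simps) (simp add: mult_le_one cantor_weight_nonneg)
qed

lemma cantor_weight_pos_le_half: "0 < z \<Longrightarrow> cantor_weight z \<le> 1/2"
proof (induction z rule: cantor_weight.induct)
  case (1 z)
  show ?case
  proof (cases "z mod 3 = 0")
    case True
    have "z = 3 * (z div 3)"
      using mult_div_mod_eq[of 3 z] True by simp
    with "1.prems" have "0 < z div 3"
      by linarith
    with 1 True show ?thesis
      by (subst cantor_weight.simps) (simp add: digit_weight_def)
  next
    case False
    then have "digit_weight (z mod 3) \<le> 1/2" "0 \<le> digit_weight (z mod 3)"
      by (auto simp: digit_weight_def)
    then have "digit_weight (z mod 3) * cantor_weight (z div 3) \<le> 1/2"
      using cantor_weight_le_1[of "z div 3"] cantor_weight_nonneg[of "z div 3"]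
      by (meson order_trans mult_left_le)
    with "1.prems" show ?thesis
      by (subst cantor_weight.simps) simp
  qed
qed

lemma cantor_weight_ge_1_iff: "1 \<le> cantor_weight z \<longleftrightarrow> z = 0"
  using cantor_weight_neg[of z] cantor_weight_pos_le_half[of z]
  by (cases "z" "0::int" rule: linorder_cases) auto

lemma cantor_weight_zero_or_half_power: "cantor_weight z = 0 \<or> (\<exists>k. cantor_weight z = (1/2) ^ k)"
proof (induction z rule: cantor_weight.induct)
  case (1 z)
  show ?case
  proof (cases "z \<le> 0")
    case True
    then show ?thesis
      by (cases "z = 0") (auto simp: cantor_weight_neg intro: exI[of _ 0])
  next
    case False
    then have IH: "cantor_weight (z div 3) = 0 \<or> (\<exists>k. cantor_weight (z div 3) = (1/2) ^ k)"
      using "1.IH" by simp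
    have z: "cantor_weight z = digit_weight (z mod 3) * cantor_weight (z div 3)"
      using False by (subst cantor_weight.simps) simp
    consider "digit_weight (z mod 3) = 0" | "digit_weight (z mod 3) = 1"
      | "digit_weight (z mod 3) = 1/2"
      unfolding digit_weight_def by (cases "z mod 3 = 0"; cases "z mod 3 = 1") auto
    then show ?thesis
    proof cases
      case 3
      with IH z show ?thesis
        by (metis mult.commute mult_zero_right power_Suc)
    qed (use IH z in auto)
  qed
qed

lemma cantor_weight_pos_decomp:
  "0 < z \<Longrightarrow> cantor_weight z \<noteq> 0 \<Longrightarrow> \<exists>b w. 0 \<le> w \<and> z = 3 ^ b * (3 * w + 2)"
proof (induction z rule: cantor_weight.induct)
  case (1 z)
  have z: "z = 3 * (z div 3) + z mod 3" and "0 \<le> z mod 3" "z mod 3 < 3"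
    by simp_all
  then consider "z mod 3 = 0" | "z mod 3 = 1" | "z mod 3 = 2" by linarith
  then show ?case
  proof cases
    case 1
    then have "0 < z div 3" "cantor_weight (z div 3) \<noteq> 0"
      using "1.prems" z cantor_weight_pow3_mult[of 1 "z div 3"] by auto
    then obtain b w where "0 \<le> w" "z div 3 = 3 ^ b * (3 * w + 2)"
      using "1.IH" "1.prems"(1) by auto
    with 1 z show ?thesis
      by (intro exI[of _ "Suc b"] exI[of _ w]) simp
  next
    case 2
    then show ?thesis
      using "1.prems"(2) z cantor_weight_3_mult_plus_1[of "z div 3"] by simp
  next
    case 3
    have "0 \<le> z div 3"
      using "1.prems"(1) by simp
    moreover have "z = 3 ^ 0 * (3 * (z div 3) + 2)"
      using 3 z by simp
    ultimately show ?thesis by blast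
  qed
qed

definition cantor_support :: "int set" where
  "cantor_support = {z. cantor_weight z \<noteq> 0}"

lemma card_cantor_support_pow3: "card (cantor_support \<inter> {0..<3 ^ s}) \<le> 2 ^ s"
proof (induction s)
  case 0
  have "cantor_support \<inter> {0..<3 ^ 0} = {0}"
    by (auto simp: cantor_support_def)
  then show ?case by simp
next
  case (Suc s)
  have "cantor_support \<inter> {0..<3 ^ Suc s}
      \<subseteq> (\<lambda>(d, r). 3 * r + d) ` ({0, 2} \<times> (cantor_support \<inter> {0..<3 ^ s}))"
  proof
    fix r assume r: "r \<in> cantor_support \<inter> {0..<3 ^ Suc s}"
    have low: "0 \<le> r mod 3" "r mod 3 < 3"
      by simp_all
    have "cantor_weight r = digit_weight (r mod 3) * cantor_weight (r div 3)"
      using cantor_weight_digit[OF low, of "r div 3"] by simp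
    then have "digit_weight (r mod 3) \<noteq> 0" "cantor_weight (r div 3) \<noteq> 0"
      using r by (auto simp: cantor_support_def)
    then have "r mod 3 \<noteq> 1" "r div 3 \<in> cantor_support \<inter> {0..<3 ^ s}"
      using r by (auto simp: digit_weight_def cantor_support_def)
    moreover from low \<open>r mod 3 \<noteq> 1\<close> have "r mod 3 \<in> {0, 2}"
      by auto
    ultimately show "r \<in> (\<lambda>(d, r). 3 * r + d) ` ({0, 2} \<times> (cantor_support \<inter> {0..<3 ^ s}))"
      by (intro image_eqI[of _ _ "(r mod 3, r div 3)"]) auto
  qed
  then have "card (cantor_support \<inter> {0..<3 ^ Suc s})
      \<le> card ({0::int, 2} \<times> (cantor_support \<inter> {0..<3 ^ s}))"
    by (intro surj_card_le) auto
  also have "\<dots> \<le> 2 * 2 ^ s"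
    using Suc.IH by (simp add: card_cartesian_product)
  finally show ?case
    by simp
qed

lemma card_cantor_support_window:
  "card (cantor_support \<inter> {c..<c + int L}) \<le> (L div 3 ^ s + 1) * 2 ^ s"
proof -
  define q :: int where "q = 3 ^ s"
  have q: "0 < q"
    by (simp add: q_def)
  define f where "f n = ((n - c) div q, n mod q)" for n
  have "inj_on f {c..<c + int L}"
  proof (rule inj_onI)
    fix n n' assume "f n = f n'"
    then have div: "(n - c) div q = (n' - c) div q" and "n mod q = n' mod q"
      by (simp_all add: f_def)
    then have "(n - c) mod q = (n' - c) mod q"
      by (metis mod_diff_left_eq)
    with div have "n - c = n' - c"
      by (metis mult_div_mod_eq)
    then show "n = n'"
      by simp
  qed
  moreover have "f ` (cantor_support \<inter> {c..<c + int L})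
      \<subseteq> {0..int (L div 3 ^ s)} \<times> (cantor_support \<inter> {0..<3 ^ s})"
  proof (rule image_subsetI)
    fix n assume n: "n \<in> cantor_support \<inter> {c..<c + int L}"
    have "(n - c) div q \<le> int L div q"
      using n q by (intro zdiv_mono1) auto
    also have "\<dots> = int (L div 3 ^ s)"
      by (simp add: q_def zdiv_int)
    finally have "(n - c) div q \<in> {0..int (L div 3 ^ s)}"
      using n q by (simp add: pos_imp_zdiv_nonneg_iff)
    moreover have "cantor_weight n = cantor_weight (n div q) * cantor_weight (n mod q)"
      using cantor_weight_mult[of "n mod q" s "n div q"] q by (simp add: q_def)
    then have "n mod q \<in> cantor_support \<inter> {0..<3 ^ s}"
      using n q by (simp add: q_def cantor_support_def)
    ultimately show "f n \<in> {0..int (L div 3 ^ s)} \<times> (cantor_support \<inter> {0..<3 ^ s})"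
      by (simp add: f_def)
  qed
  ultimately have "card (cantor_support \<inter> {c..<c + int L})
      \<le> card ({0..int (L div 3 ^ s)} \<times> (cantor_support \<inter> {0..<3 ^ s}))"
    by (intro card_inj_on_le[where f = f]) (auto intro: inj_on_subset)
  also have "\<dots> = (L div 3 ^ s + 1) * card (cantor_support \<inter> {0..<3 ^ s})"
    by (simp add: card_cartesian_product nat_add_distrib)
  also have "\<dots> \<le> (L div 3 ^ s + 1) * 2 ^ s"
    using card_cantor_support_pow3[of s] by (rule mult_left_mono) simp
  finally show ?thesis .
qed

section \<open>Banach density zero\<close>

definition banach_density_zero :: "nat set \<Rightarrow> bool" where
  "banach_density_zero A \<longleftrightarrow>
     (\<forall>e>0. \<exists>N. \<forall>a b. N \<le> card {a..b} \<longrightarrow> real (card (A \<inter> {a..b})) \<le> e * real (card {a..b}))"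

lemma banach_density_zero_subset:
  assumes "banach_density_zero A" "B \<subseteq> A"
  shows "banach_density_zero B"
  unfolding banach_density_zero_def
proof (intro allI impI)
  fix e :: real assume "0 < e"
  then obtain N where N: "\<And>a b. N \<le> card {a..b} \<Longrightarrow> real (card (A \<inter> {a..b})) \<le> e * card {a..b}"
    using assms(1) unfolding banach_density_zero_def by blast
  have "card (B \<inter> {a..b}) \<le> card (A \<inter> {a..b})" for a b
    using assms(2) by (intro card_mono) auto
  then show "\<exists>N. \<forall>a b. N \<le> card {a..b} \<longrightarrow> real (card (B \<inter> {a..b})) \<le> e * card {a..b}"
    using N by (meson of_nat_le_iff order_trans)
qed

lemma banach_density_zero_Un:
  assumes "banach_density_zero A" "banach_density_zero B"
  shows "banach_density_zero (A \<union> B)"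
  unfolding banach_density_zero_def
proof (intro allI impI)
  fix e :: real assume "0 < e"
  then obtain NA NB where
    NA: "\<And>a b. NA \<le> card {a..b} \<Longrightarrow> real (card (A \<inter> {a..b})) \<le> e / 2 * card {a..b}" and
    NB: "\<And>a b. NB \<le> card {a..b} \<Longrightarrow> real (card (B \<inter> {a..b})) \<le> e / 2 * card {a..b}"
    using assms unfolding banach_density_zero_def by (meson half_gt_zero)
  have "real (card ((A \<union> B) \<inter> {a..b})) \<le> e * card {a..b}" if "max NA NB \<le> card {a..b}" for a b
  proof -
    have "card ((A \<union> B) \<inter> {a..b}) \<le> card (A \<inter> {a..b}) + card (B \<inter> {a..b})"
      by (metis Int_Un_distrib2 card_Un_le)
    then show ?thesis
      using NA[of a b] NB[of a b] that by simp
  qed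
  then show "\<exists>N. \<forall>a b. N \<le> card {a..b} \<longrightarrow> real (card ((A \<union> B) \<inter> {a..b})) \<le> e * card {a..b}"
    by blast
qed

lemma banach_density_zero_UN:
  assumes "finite I" "\<And>i. i \<in> I \<Longrightarrow> banach_density_zero (A i)"
  shows "banach_density_zero (\<Union>i\<in>I. A i)"
  using assms
proof (induction I rule: finite_induct)
  case empty
  then show ?case
    by (simp add: banach_density_zero_def)
next
  case (insert i I)
  then show ?case
    by (simp add: banach_density_zero_Un)
qed

lemma banach_density_zero_shift:
  assumes "banach_density_zero A"
  shows "banach_density_zero {n. n + i \<in> A}"
  unfolding banach_density_zero_def
proof (intro allI impI)
  fix e :: real assume "0 < e"
  then obtain N where N: "\<And>a b. N \<le> card {a..b} \<Longrightarrow> real (card (A \<inter> {a..b})) \<le> e * card {a..b}"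
    using assms unfolding banach_density_zero_def by blast
  have "card ({n. n + i \<in> A} \<inter> {a..b}) = card (A \<inter> {a + i..b + i})" for a b
  proof (rule bij_betw_same_card)
    show "bij_betw (\<lambda>n. n + i) ({n. n + i \<in> A} \<inter> {a..b}) (A \<inter> {a + i..b + i})"
      by (rule bij_betw_byWitness[where f' = "\<lambda>n. n - i"]) auto
  qed
  moreover have "card {a + i..b + i} = card {a..b}" for a b
    by simp
  ultimately show "\<exists>N. \<forall>a b. N \<le> card {a..b} \<longrightarrow> real (card ({n. n + i \<in> A} \<inter> {a..b})) \<le> e * card {a..b}"
    using N by metis
qed

lemma banach_density_one_if_compl_zero:
  assumes "banach_density_zero (- F)"
  shows "banach_density_one F"
  unfolding banach_density_one_def
proof (intro allI impI)
  fix l :: real assume "l < 1"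
  then obtain N where N: "\<And>a b. N \<le> card {a..b} \<Longrightarrow> real (card (- F \<inter> {a..b})) \<le> (1 - l) * card {a..b}"
    using assms unfolding banach_density_zero_def by (meson diff_gt_0_iff_gt)
  have "l * card {a..b} \<le> real (card (F \<inter> {a..b}))" if "N \<le> card {a..b}" for a b
  proof -
    have "card (F \<inter> {a..b}) + card (- F \<inter> {a..b}) = card (F \<inter> {a..b} \<union> - F \<inter> {a..b})"
      by (rule card_Un_disjoint[symmetric]) auto
    also have "F \<inter> {a..b} \<union> - F \<inter> {a..b} = {a..b}"
      by blast
    finally show ?thesis
      using N[OF that] by (simp add: algebra_simps flip: of_nat_add)
  qed
  then show "\<exists>N\<ge>1. \<forall>a b. a \<le> b \<longrightarrow> N \<le> card {a..b} \<longrightarrow> l * card {a..b} \<le> real (card (F \<inter> {a..b}))"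
    by (meson max.cobounded2 max.boundedE)
qed

lemma card_shifted_cantor_support:
  "card ({n. m + int n \<in> cantor_support} \<inter> {a..b}) \<le> (card {a..b} div 3 ^ s + 1) * 2 ^ s"
proof -
  have "(\<lambda>n. m + int n) ` ({n. m + int n \<in> cantor_support} \<inter> {a..b})
      \<subseteq> cantor_support \<inter> {m + int a..<m + int a + int (card {a..b})}"
    by auto
  then have "card ({n. m + int n \<in> cantor_support} \<inter> {a..b})
      \<le> card (cantor_support \<inter> {m + int a..<m + int a + int (card {a..b})})"
    by (intro card_inj_on_le inj_onI) auto
  also have "\<dots> \<le> (card {a..b} div 3 ^ s + 1) * 2 ^ s"
    by (rule card_cantor_support_window)
  finally show ?thesis .
qed

lemma banach_density_zero_cantor_support:
  "banach_density_zero {n. m + int n \<in> cantor_support}"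
  unfolding banach_density_zero_def
proof (intro allI impI)
  fix e :: real assume e: "0 < e"
  obtain s where s: "(2/3) ^ s < e / 2"
    using real_arch_pow_inv[of "e / 2" "2/3"] e by auto
  define N where "N = nat \<lceil>2 * 2 ^ s / e\<rceil>"
  have "real (card ({n. m + int n \<in> cantor_support} \<inter> {a..b})) \<le> e * card {a..b}"
    if N: "N \<le> card {a..b}" for a b
  proof -
    define L where "L = card {a..b}"
    have "real (card ({n. m + int n \<in> cantor_support} \<inter> {a..b})) \<le> (real (L div 3 ^ s) + 1) * 2 ^ s"
      using card_shifted_cantor_support[of m a b s] unfolding L_def
      by (metis of_nat_1 of_nat_add of_nat_le_iff of_nat_mult of_nat_numeral of_nat_power)
    also have "\<dots> \<le> (real L / 3 ^ s + 1) * 2 ^ s"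
      using of_nat_div_le_of_nat[of L "3 ^ s"] by (intro mult_right_mono add_right_mono) simp_all
    also have "\<dots> = (2/3) ^ s * L + 2 ^ s"
      by (simp add: power_divide field_simps)
    also have "\<dots> \<le> e / 2 * L + e / 2 * L"
    proof (rule add_mono)
      show "(2/3) ^ s * real L \<le> e / 2 * L"
        using s by (intro mult_right_mono) auto
      have "2 * 2 ^ s / e \<le> real L"
        using N unfolding L_def N_def by linarith
      then show "(2::real) ^ s \<le> e / 2 * L"
        using e by (simp add: field_simps)
    qed
    finally show ?thesis
      by (simp add: L_def)
  qed
  then show "\<exists>N. \<forall>a b. N \<le> card {a..b} \<longrightarrow>
      real (card ({n. m + int n \<in> cantor_support} \<inter> {a..b})) \<le> e * card {a..b}"
    by blast
qed

section \<open>Limits of local patterns\<close>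

lemma cantor_weight_mult_add:
  "cantor_weight (3 ^ p * v + t) = cantor_weight (v + t div 3 ^ p) * cantor_weight (t mod 3 ^ p)"
proof -
  have "3 ^ p * v + t = 3 ^ p * (v + t div 3 ^ p) + t mod 3 ^ p"
    by (simp add: algebra_simps)
  then show ?thesis
    by (simp add: cantor_weight_mult)
qed

lemma cantor_weight_add_small:
  assumes "0 \<le> w" "\<bar>d\<bar> < 3 ^ b"
  shows "cantor_weight (3 ^ b * (3 * w + 2) + d) = cantor_weight (3 ^ b * (3 * w + 2)) * cantor_weight d"
proof (cases "0 \<le> d")
  case True
  then show ?thesis
    using assms by (simp add: cantor_weight_mult_add cantor_weight_pow3_mult)
next
  case False
  have "cantor_weight (3 ^ b * (3 * w + 2) + d) = cantor_weight (3 ^ b * (3 * w + 1) + (3 ^ b + d))"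
    by (rule arg_cong[where f = cantor_weight]) (simp add: algebra_simps)
  also have "\<dots> = 0"
    using False assms(2) by (simp only: cantor_weight_mult cantor_weight_3_mult_plus_1)
  finally have "cantor_weight (3 ^ b * (3 * w + 2) + d) = 0" .
  then show ?thesis
    using False by (simp add: cantor_weight_neg)
qed

lemma cantor_weight_append_digit:
  "cantor_weight (3 ^ Suc b * v + 2 * 3 ^ b) = cantor_weight v / 2"
  using cantor_weight_mult[of "2 * 3 ^ b" "Suc b" v] by (simp add: cantor_weight_2_mult_pow3)

text \<open>The bound \<open>cantor_weight (\<sigma> j) \<le> cantor_weight L\<close> makes the scale factor of a limit of
  scaled patterns a power of \<open>1/2\<close> again.\<close>

definition pattern_limit :: "(nat \<Rightarrow> int) \<Rightarrow> int \<Rightarrow> bool" where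
  "pattern_limit \<sigma> L \<longleftrightarrow> 0 < cantor_weight L \<and>
     (\<forall>\<^sub>F j in sequentially. cantor_weight (\<sigma> j) \<le> cantor_weight L) \<and>
     (\<forall>d. \<forall>\<^sub>F j in sequentially.
        cantor_weight (\<sigma> j + d) / cantor_weight (\<sigma> j) = cantor_weight (L + d) / cantor_weight L)"

lemma pattern_limit_const:
  assumes "\<forall>\<^sub>F j in sequentially. \<sigma> j = c" "\<forall>\<^sub>F j in sequentially. 0 < cantor_weight (\<sigma> j)"
  shows "pattern_limit \<sigma> c"
proof -
  have "\<forall>\<^sub>F j in sequentially. 0 < cantor_weight c"
    using assms by eventually_elim simp
  then have "0 < cantor_weight c"
    by (simp add: eventually_const_iff)
  with assms(1) show ?thesis
    unfolding pattern_limit_def by (auto elim: eventually_mono)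
qed

lemma pattern_limit_deep:
  assumes dec: "\<forall>\<^sub>F j in sequentially. 0 < cantor_weight (\<sigma> j) \<and> 0 \<le> w j \<and> \<sigma> j = 3 ^ b j * (3 * w j + 2)"
    and b: "filterlim b at_top sequentially"
  shows "pattern_limit \<sigma> 0"
  unfolding pattern_limit_def
proof (intro conjI allI)
  fix d :: int
  have "\<forall>\<^sub>F j in sequentially. nat \<bar>d\<bar> \<le> b j"
    using b by (simp add: filterlim_at_top)
  then show "\<forall>\<^sub>F j in sequentially.
      cantor_weight (\<sigma> j + d) / cantor_weight (\<sigma> j) = cantor_weight (0 + d) / cantor_weight 0"
    using dec
  proof eventually_elim
    case (elim j)
    then have pos: "0 < cantor_weight (\<sigma> j)" and \<sigma>: "\<sigma> j = 3 ^ b j * (3 * w j + 2)"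
      and w: "0 \<le> w j" and b: "nat \<bar>d\<bar> \<le> b j"
      by auto
    have "nat \<bar>d\<bar> < 3 ^ nat \<bar>d\<bar>"
      using less_exp[of "nat \<bar>d\<bar>"] power_mono[of "2::nat" 3 "nat \<bar>d\<bar>"] by linarith
    then have "int (nat \<bar>d\<bar>) < int (3 ^ nat \<bar>d\<bar>)"
      by (simp only: of_nat_less_iff)
    then have "\<bar>d\<bar> < 3 ^ nat \<bar>d\<bar>"
      by simp
    also have "\<dots> \<le> 3 ^ b j"
      using b by (intro power_increasing) auto
    finally have "cantor_weight (\<sigma> j + d) = cantor_weight (\<sigma> j) * cantor_weight d"
      unfolding \<sigma> using cantor_weight_add_small[OF w] by blast
    then show ?case
      using pos by simp
  qed
qed (simp_all add: cantor_weight_le_1)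

lemma pattern_limit_append_digit:
  assumes eq: "\<forall>\<^sub>F j in sequentially. \<sigma> j = 3 ^ Suc b * w j + 2 * 3 ^ b"
    and w: "pattern_limit w L"
  shows "pattern_limit \<sigma> (3 ^ Suc b * L + 2 * 3 ^ b)"
  unfolding pattern_limit_def
proof (intro conjI allI)
  have L: "0 < cantor_weight L" "\<forall>\<^sub>F j in sequentially. cantor_weight (w j) \<le> cantor_weight L"
    using w by (simp_all add: pattern_limit_def)
  then show "0 < cantor_weight (3 ^ Suc b * L + 2 * 3 ^ b)"
    by (simp only: cantor_weight_append_digit)
  show "\<forall>\<^sub>F j in sequentially. cantor_weight (\<sigma> j) \<le> cantor_weight (3 ^ Suc b * L + 2 * 3 ^ b)"
    using eq L(2) by eventually_elim (simp only: cantor_weight_append_digit)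
  fix d :: int
  define e where "e = (2 * 3 ^ b + d) div 3 ^ Suc b"
  define \<rho> where "\<rho> = (2 * 3 ^ b + d) mod 3 ^ Suc b"
  have split: "cantor_weight (3 ^ Suc b * v + 2 * 3 ^ b + d) = cantor_weight (v + e) * cantor_weight \<rho>" for v
    using cantor_weight_mult_add[of "Suc b" v "2 * 3 ^ b + d"] by (simp add: e_def \<rho>_def add.assoc)
  have "\<forall>\<^sub>F j in sequentially.
      cantor_weight (w j + e) / cantor_weight (w j) = cantor_weight (L + e) / cantor_weight L"
    using w by (simp add: pattern_limit_def)
  then show "\<forall>\<^sub>F j in sequentially. cantor_weight (\<sigma> j + d) / cantor_weight (\<sigma> j)
      = cantor_weight (3 ^ Suc b * L + 2 * 3 ^ b + d) / cantor_weight (3 ^ Suc b * L + 2 * 3 ^ b)"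
    using eq
  proof eventually_elim
    case (elim j)
    have halve: "a * b / (c / 2) = 2 * b * (a / c)" for a b c :: real
      by (cases "c = 0") (simp_all add: field_simps)
    have "cantor_weight (\<sigma> j + d) / cantor_weight (\<sigma> j)
        = 2 * cantor_weight \<rho> * (cantor_weight (w j + e) / cantor_weight (w j))"
      using elim(2) by (simp only: split cantor_weight_append_digit halve)
    also have "\<dots> = cantor_weight (3 ^ Suc b * L + 2 * 3 ^ b + d) / cantor_weight (3 ^ Suc b * L + 2 * 3 ^ b)"
      using elim(1) by (simp only: split cantor_weight_append_digit halve)
    finally show ?case .
  qed
qed

lemma nat_seq_subseq_const_or_tendsto_top:
  fixes s :: "nat \<Rightarrow> nat"
  obtains r :: "nat \<Rightarrow> nat" where "strict_mono r" "\<exists>c. \<forall>j. s (r j) = c"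
    | r :: "nat \<Rightarrow> nat" where "strict_mono r" "filterlim (s \<circ> r) at_top sequentially"
proof -
  obtain f where f: "strict_mono f" "monoseq (s \<circ> f)"
    using seq_monosub[of s] by (auto simp: o_def)
  show thesis
  proof (cases "\<exists>B. \<forall>j. s (f j) \<le> B")
    case True
    then have "finite (range (s \<circ> f))"
      by (auto intro: finite_subset[of _ "{..B}" for B])
    then obtain c where inf: "infinite {j. (s \<circ> f) j = c}"
      using pigeonhole_infinite[of UNIV "s \<circ> f"] by auto
    define g where "g = enumerate {j. (s \<circ> f) j = c}"
    have "strict_mono (f \<circ> g)" "\<forall>j. s ((f \<circ> g) j) = c"
      using f(1) strict_mono_enumerate[OF inf] enumerate_in_set[OF inf]
      by (auto simp: g_def intro: strict_mono_o)
    then show thesis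
      by (intro that(1)[of "f \<circ> g"]) auto
  next
    case False
    have "incseq (s \<circ> f)"
    proof -
      have "\<not> decseq (s \<circ> f)"
        using False by (metis comp_apply decseq_def le0)
      then show ?thesis
        using f(2) unfolding monoseq_iff by blast
    qed
    have "filterlim (s \<circ> f) at_top sequentially"
      unfolding filterlim_at_top eventually_sequentially
    proof
      fix Z
      obtain j0 where "Z \<le> s (f j0)"
        using False by (meson nle_le)
      then show "\<exists>N. \<forall>j\<ge>N. Z \<le> (s \<circ> f) j"
        using \<open>incseq (s \<circ> f)\<close> by (metis comp_apply incseqD order_trans)
    qed
    then show thesis
      using that(2) f(1) by blast
  qed
qed

text \<open>The lowest digit \<open>2\<close> of \<open>\<sigma> j\<close> either stays at a bounded position along a subsequence, and
  one recurses on the digits above it, or it escapes to infinity, and then the pattern near \<open>\<sigma> j\<close> is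
  the pattern near \<open>0\<close>.\<close>

lemma pattern_limit_exists_decomposed:
  assumes IH: "\<And>\<tau>. \<forall>\<^sub>F j in sequentially. (1/2) ^ q \<le> cantor_weight (\<tau> j) \<Longrightarrow>
      \<exists>r L. strict_mono r \<and> pattern_limit (\<tau> \<circ> r) L"
    and H: "\<forall>\<^sub>F j in sequentially. (1/2) ^ Suc q \<le> cantor_weight (\<sigma> j)"
    and dec: "\<forall>\<^sub>F j in sequentially. 0 \<le> w j \<and> \<sigma> j = 3 ^ b j * (3 * w j + 2)"
  shows "\<exists>r L. strict_mono r \<and> pattern_limit (\<sigma> \<circ> r) L"
proof (cases rule: nat_seq_subseq_const_or_tendsto_top[of b])
  case (1 r)
  then obtain b0 where b0: "\<And>j. b (r j) = b0"
    by blast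
  have eq: "\<forall>\<^sub>F j in sequentially. (\<sigma> \<circ> r) j = 3 ^ Suc b0 * (w \<circ> r) j + 2 * 3 ^ b0"
    using eventually_subseq[OF 1(1) dec] by eventually_elim (simp add: b0 algebra_simps)
  have "\<forall>\<^sub>F j in sequentially. (1/2) ^ q \<le> cantor_weight ((w \<circ> r) j)"
    using eq eventually_subseq[OF 1(1) H]
  proof eventually_elim
    case (elim j)
    have "cantor_weight ((\<sigma> \<circ> r) j) = cantor_weight ((w \<circ> r) j) / 2"
      unfolding elim(1) by (rule cantor_weight_append_digit)
    with elim(2) show ?case
      by simp
  qed
  then obtain r' L where r': "strict_mono r'" "pattern_limit (w \<circ> r \<circ> r') L"
    using IH by blast
  have "pattern_limit (\<sigma> \<circ> r \<circ> r') (3 ^ Suc b0 * L + 2 * 3 ^ b0)"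
    using eventually_subseq[OF r'(1) eq] r'(2)
    by (intro pattern_limit_append_digit[where w = "w \<circ> r \<circ> r'"]) (simp_all add: o_def)
  then show ?thesis
    using 1(1) r'(1) by (intro exI[of _ "r \<circ> r'"] exI) (simp_all add: strict_mono_o o_assoc)
next
  case (2 r)
  have "\<forall>\<^sub>F j in sequentially. 0 < cantor_weight (\<sigma> (r j))"
    using eventually_subseq[OF 2(1) H] by eventually_elim (erule less_le_trans[rotated], simp)
  then have "\<forall>\<^sub>F j in sequentially. 0 < cantor_weight ((\<sigma> \<circ> r) j) \<and> 0 \<le> (w \<circ> r) j
      \<and> (\<sigma> \<circ> r) j = 3 ^ (b \<circ> r) j * (3 * (w \<circ> r) j + 2)"
    using eventually_subseq[OF 2(1) dec] by eventually_elim simp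
  then have "pattern_limit (\<sigma> \<circ> r) 0"
    using 2(2) by (rule pattern_limit_deep)
  then show ?thesis
    using 2(1) by blast
qed

text \<open>A lower bound \<open>(1/2)\<^sup>q\<close> on the weights bounds the number of digits \<open>2\<close> by \<open>q\<close>.\<close>

lemma pattern_limit_exists:
  "\<forall>\<^sub>F j in sequentially. (1/2) ^ q \<le> cantor_weight (\<sigma> j) \<Longrightarrow>
    \<exists>r L. strict_mono r \<and> pattern_limit (\<sigma> \<circ> r) L"
proof (induction q arbitrary: \<sigma>)
  case 0
  then have "\<forall>\<^sub>F j in sequentially. \<sigma> j = 0"
    by (simp add: cantor_weight_ge_1_iff)
  then have "pattern_limit (\<sigma> \<circ> id) 0"
    by (intro pattern_limit_const) (auto elim: eventually_mono)
  then show ?case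
    using strict_mono_id by blast
next
  case (Suc q \<sigma>)
  have pos: "\<forall>\<^sub>F j in sequentially. 0 < cantor_weight (\<sigma> j)"
    using Suc.prems by eventually_elim (erule less_le_trans[rotated], simp)
  then have nonneg: "\<forall>\<^sub>F j in sequentially. 0 \<le> \<sigma> j"
    by eventually_elim (use cantor_weight_neg in \<open>force simp: not_le[symmetric]\<close>)
  show ?case
  proof (cases rule: nat_seq_subseq_const_or_tendsto_top[of "nat \<circ> \<sigma>"])
    case (1 r)
    then obtain c where c: "\<And>j. nat (\<sigma> (r j)) = c"
      by auto
    have "\<forall>\<^sub>F j in sequentially. (\<sigma> \<circ> r) j = int c"
      using eventually_subseq[OF 1(1) nonneg] by eventually_elim (metis c nat_0_le comp_apply)
    then have "pattern_limit (\<sigma> \<circ> r) (int c)"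
      using eventually_subseq[OF 1(1) pos] by (intro pattern_limit_const) (simp_all add: o_def)
    then show ?thesis
      using 1(1) by blast
  next
    case (2 r)
    have "\<forall>j. \<exists>bw. 0 < \<sigma> j \<and> cantor_weight (\<sigma> j) \<noteq> 0 \<longrightarrow>
        0 \<le> snd bw \<and> \<sigma> j = 3 ^ fst bw * (3 * snd bw + 2)"
      using cantor_weight_pos_decomp by (metis fst_conv snd_conv)
    then obtain bw where bw: "\<And>j. 0 < \<sigma> j \<Longrightarrow> cantor_weight (\<sigma> j) \<noteq> 0 \<Longrightarrow>
        0 \<le> snd (bw j) \<and> \<sigma> j = 3 ^ fst (bw j) * (3 * snd (bw j) + 2)"
      by (metis choice)
    have "\<forall>\<^sub>F j in sequentially. 1 \<le> (nat \<circ> \<sigma> \<circ> r) j"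
      using 2(2) by (simp add: filterlim_at_top)
    then have "\<forall>\<^sub>F j in sequentially.
        0 \<le> snd (bw (r j)) \<and> \<sigma> (r j) = 3 ^ fst (bw (r j)) * (3 * snd (bw (r j)) + 2)"
      using eventually_subseq[OF 2(1) pos] by eventually_elim (intro bw; simp)
    from pattern_limit_exists_decomposed[OF Suc.IH eventually_subseq[OF 2(1) Suc.prems] this]
    obtain r' L where "strict_mono r'" "pattern_limit (\<sigma> \<circ> (r \<circ> r')) L"
      by (auto simp: o_def)
    then show ?thesis
      using 2(1) strict_mono_o by blast
  qed
qed

section \<open>The shift on sequences\<close>

definition shift :: "(nat \<Rightarrow> 'a) \<Rightarrow> nat \<Rightarrow> 'a" where
  "shift u i = u (Suc i)"

lemma funpow_shift: "(shift ^^ n) u = (\<lambda>i. u (n + i))"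
  by (induction n) (simp_all add: shift_def)

lemma continuous_on_shift: "continuous_on A shift"
proof (rule continuous_on_subset)
  show "continuous_on UNIV (shift :: (nat \<Rightarrow> 'a) \<Rightarrow> _)"
    unfolding shift_def
    by (intro continuous_on_coordinatewise_then_product continuous_on_product_coordinates)
qed simp

lemma dist_fun_le_if_agree:
  fixes x y :: "'a::countable \<Rightarrow> 'b::metric_space"
  assumes "\<And>n. n \<le> N \<Longrightarrow> x (from_nat n) = y (from_nat n)"
  shows "dist x y \<le> (1/2) ^ N"
proof -
  have "{dist (x (from_nat n)) (y (from_nat n)) | n. n \<le> N} = {0}"
    using assms by (auto intro!: exI[of _ 0])
  then show ?thesis
    using dist_fun_le_dist_first_terms[of x y N] by simp
qed

lemma dist_fun_ge_coordinate:
  fixes x y :: "'a::countable \<Rightarrow> 'b::metric_space"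
  shows "(1/2) ^ to_nat i * min (dist (x i) (y i)) 1 \<le> dist x y"
proof -
  define h where "h = (\<lambda>n. (1/2) ^ n * min (dist (x (from_nat n)) (y (from_nat n))) 1)"
  have "summable h"
    unfolding h_def
    by (rule summable_comparison_test'[of "\<lambda>n. (1/2) ^ n"]) (auto simp: summable_geometric_iff)
  then have "sum h {to_nat i} \<le> suminf h"
    by (rule sum_le_suminf) (auto simp: h_def)
  then show ?thesis
    by (simp add: dist_fun_def h_def)
qed

lemma tendsto_fun_apply:
  fixes f :: "'i \<Rightarrow> 'a::countable \<Rightarrow> 'b::metric_space"
  assumes "(f \<longlongrightarrow> l) F"
  shows "((\<lambda>j. f j i) \<longlongrightarrow> l i) F"
  using continuous_on_product_coordinates assms by (rule continuous_on_tendsto_compose) auto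

lemma compact_unit_cube: "compact {u :: nat \<Rightarrow> real. \<forall>i. u i \<in> {0..1}}"
proof -
  have "compactin (product_topology (\<lambda>_. euclidean) UNIV) (PiE UNIV (\<lambda>_::nat. {0..1::real}))"
    by (simp add: compactin_PiE)
  moreover have "PiE UNIV (\<lambda>_::nat. {0..1::real}) = {u. \<forall>i. u i \<in> {0..1}}"
    by (auto simp: PiE_iff)
  ultimately show ?thesis
    by (simp add: euclidean_product_topology)
qed

lemma banach_proximal_shift:
  fixes u v :: "nat \<Rightarrow> 'a::real_normed_vector"
  assumes "banach_density_zero {n. u n \<noteq> 0}" "banach_density_zero {n. v n \<noteq> 0}"
  shows "banach_proximal dist shift u v"
  unfolding banach_proximal_def
proof (intro allI impI)
  fix e :: real assume "0 < e"
  then obtain N where N: "(1/2) ^ N < e"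
    using real_arch_pow_inv[of e "1/2"] by auto
  define Bad where "Bad = (\<Union>i \<in> from_nat ` {..N}. {n. n + i \<in> {n. u n \<noteq> 0}} \<union> {n. n + i \<in> {n. v n \<noteq> 0}})"
  have "banach_density_zero Bad"
    unfolding Bad_def using assms
    by (intro banach_density_zero_UN banach_density_zero_Un banach_density_zero_shift) auto
  moreover have "- {n. dist ((shift ^^ n) u) ((shift ^^ n) v) < e} \<subseteq> Bad"
  proof
    fix n assume "n \<in> - {n. dist ((shift ^^ n) u) ((shift ^^ n) v) < e}"
    then have "\<not> dist (\<lambda>i. u (n + i)) (\<lambda>i. v (n + i)) \<le> (1/2) ^ N"
      using N by (simp add: funpow_shift)
    then obtain k where "k \<le> N" "u (n + from_nat k) \<noteq> v (n + from_nat k)"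
      using dist_fun_le_if_agree[of N "\<lambda>i. u (n + i)" "\<lambda>i. v (n + i)"] by blast
    then show "n \<in> Bad"
      unfolding Bad_def by (intro UN_I[of "from_nat k"]) (auto simp: add.commute)
  qed
  ultimately show "banach_density_one {n. dist ((shift ^^ n) u) ((shift ^^ n) v) < e}"
    by (intro banach_density_one_if_compl_zero) (rule banach_density_zero_subset)
qed

lemma not_asymptotic_shift:
  fixes u v :: "nat \<Rightarrow> 'a::metric_space"
  assumes "0 < c" "\<exists>\<^sub>F n in sequentially. c \<le> dist (u n) (v n)"
  shows "\<not> asymptotic dist shift u v"
proof
  define c' where "c' = (1/2) ^ to_nat (0::nat) * min c 1"
  assume "asymptotic dist shift u v"
  then have close: "\<forall>\<^sub>F n in sequentially. dist ((shift ^^ n) u) ((shift ^^ n) v) < c'"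
    unfolding asymptotic_def c'_def using assms(1) by (intro order_tendstoD) auto
  have far: "c' \<le> dist ((shift ^^ n) u) ((shift ^^ n) v)" if "c \<le> dist (u n) (v n)" for n
  proof -
    have "c' \<le> (1/2) ^ to_nat (0::nat) * min (dist (u (n + 0)) (v (n + 0))) 1"
      unfolding c'_def using that by (intro mult_left_mono) auto
    also have "\<dots> \<le> dist ((shift ^^ n) u) ((shift ^^ n) v)"
      unfolding funpow_shift by (rule dist_fun_ge_coordinate)
    finally show ?thesis .
  qed
  from close have "\<forall>\<^sub>F n in sequentially. \<not> c \<le> dist (u n) (v n)"
    by eventually_elim (use far in fastforce)
  then show False
    using assms(2) by (simp add: frequently_def)
qed

section \<open>The space of scaled shifts of the Cantor weight\<close>

definition cantor_profile :: "nat \<Rightarrow> int \<Rightarrow> nat \<Rightarrow> real" where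
  "cantor_profile k m i = (1/2) ^ k * cantor_weight (m + int i)"

definition cantor_profiles :: "(nat \<Rightarrow> real) set" where
  "cantor_profiles = insert (\<lambda>_. 0) {cantor_profile k m | k m. True}"

lemma cantor_profilesE:
  assumes "u \<in> cantor_profiles"
  obtains "u = (\<lambda>_. 0)" | k m where "u = cantor_profile k m"
  using assms unfolding cantor_profiles_def by blast

lemma cantor_profile_in_profiles [simp]: "cantor_profile k m \<in> cantor_profiles"
  by (auto simp: cantor_profiles_def)

lemma zero_in_cantor_profiles [simp]: "(\<lambda>_. 0) \<in> cantor_profiles"
  by (simp add: cantor_profiles_def)

lemma shift_cantor_profile: "shift (cantor_profile k m) = cantor_profile k (m + 1)"
  by (simp add: fun_eq_iff shift_def cantor_profile_def algebra_simps)

lemma shift_zero: "shift (\<lambda>_. 0) = (\<lambda>_. 0)"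
  by (simp add: shift_def[abs_def])

lemma shift_cantor_profiles: "shift ` cantor_profiles \<subseteq> cantor_profiles"
  by (auto simp: shift_cantor_profile shift_zero elim!: cantor_profilesE)

lemma countable_cantor_profiles: "countable cantor_profiles"
proof -
  have "{cantor_profile k m | k m. True} = (\<lambda>(k, m). cantor_profile k m) ` UNIV"
    by auto
  then show ?thesis
    by (simp add: cantor_profiles_def)
qed

lemma cantor_profiles_unit_interval:
  assumes "u \<in> cantor_profiles"
  shows "u i \<in> {0..1}"
  using assms
proof (cases rule: cantor_profilesE)
  case (2 k m)
  have "(1/2::real) ^ k \<le> 1"
    by (simp add: power_le_one)
  then show ?thesis
    using cantor_weight_nonneg[of "m + int i"] cantor_weight_le_1[of "m + int i"]
    by (simp add: 2 cantor_profile_def mult_le_one)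
qed simp

lemma banach_density_zero_profile_support:
  assumes "u \<in> cantor_profiles"
  shows "banach_density_zero {n. u n \<noteq> 0}"
proof -
  obtain m where "{n. u n \<noteq> 0} \<subseteq> {n. m + int n \<in> cantor_support}"
    using assms by (cases rule: cantor_profilesE) (auto simp: cantor_profile_def cantor_support_def)
  then show ?thesis
    using banach_density_zero_cantor_support by (rule banach_density_zero_subset[rotated])
qed

lemma cantor_weight_below_peak:
  assumes "0 < d" "d \<le> 3 ^ t"
  shows "cantor_weight (2 * 3 ^ t - d) = 0"
proof -
  have "2 * 3 ^ t - d = 3 ^ t * 1 + (3 ^ t - d)"
    by simp
  then show ?thesis
    using assms cantor_weight_mult[of "3 ^ t - d" t 1] by simp
qed

lemma cantor_profile_at_peak:
  assumes "int n = 2 * 3 ^ t - m'" "m \<le> m'" "m' - m \<le> 3 ^ t"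
  shows "cantor_profile k m n = (if m = m' then (1/2) ^ Suc k else 0)"
proof -
  have "m + int n = 2 * 3 ^ t - (m' - m)"
    using assms(1) by simp
  then have "cantor_weight (m + int n) = cantor_weight (2 * 3 ^ t - (m' - m))"
    by (rule arg_cong)
  also have "\<dots> = (if m = m' then 1/2 else 0)"
    using assms(2,3) cantor_weight_below_peak[of "m' - m" t]
    by (auto simp: cantor_weight_2_mult_pow3)
  finally have "cantor_weight (m + int n) = (if m = m' then 1/2 else 0)" .
  then show ?thesis
    by (simp add: cantor_profile_def)
qed

lemma peak_index_exists:
  fixes m M :: int
  shows "\<exists>n\<ge>N. \<exists>t. int n = 2 * 3 ^ t - m \<and> M \<le> 3 ^ t"
proof -
  define t where "t = N + nat \<bar>m\<bar> + nat \<bar>M\<bar>"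
  have "t < 3 ^ t"
    using less_exp[of t] power_mono[of "2::nat" 3 t] by linarith
  then have "int t < 3 ^ t"
    by (metis of_nat_less_iff of_nat_numeral of_nat_power)
  then have t: "int N + \<bar>m\<bar> + \<bar>M\<bar> < 3 ^ t"
    by (simp add: t_def)
  define n where "n = nat (2 * 3 ^ t - m)"
  have "int n = 2 * 3 ^ t - m"
    using t by (simp add: n_def)
  moreover from this t have "N \<le> n" "M \<le> 3 ^ t"
    by linarith+
  ultimately show ?thesis
    by blast
qed

lemma frequently_apart_from_cantor_profile:
  assumes u: "u = (\<lambda>_. 0) \<or> (\<exists>k m. u = cantor_profile k m \<and> m \<le> m')"
    and ne: "u \<noteq> cantor_profile k' m'"
  shows "\<exists>c>0. \<exists>\<^sub>F n in sequentially. c \<le> dist (u n) (cantor_profile k' m' n)"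
proof -
  obtain a :: real and M :: int where peak: "\<And>n t. int n = 2 * 3 ^ t - m' \<Longrightarrow> M \<le> 3 ^ t \<Longrightarrow> u n = a"
    and a: "a \<noteq> (1/2) ^ Suc k'"
  proof (cases "u = (\<lambda>_. 0)")
    case True
    then show ?thesis
      using that[of 0 0] by simp
  next
    case False
    then obtain k m where km: "u = cantor_profile k m" "m \<le> m'"
      using u by blast
    show ?thesis
    proof (rule that[of "m' - m" "if m = m' then (1/2) ^ Suc k else 0"])
      show "u n = (if m = m' then (1/2) ^ Suc k else 0)" if "int n = 2 * 3 ^ t - m'" "m' - m \<le> 3 ^ t" for n t
        using cantor_profile_at_peak[OF that(1) km(2) that(2)] km(1) by simp
      show "(if m = m' then (1/2) ^ Suc k else 0) \<noteq> ((1/2::real) ^ Suc k')"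
        using ne km by (auto simp: power_one_over)
    qed
  qed
  have "\<exists>\<^sub>F n in sequentially. \<bar>a - (1/2) ^ Suc k'\<bar> \<le> dist (u n) (cantor_profile k' m' n)"
    unfolding frequently_sequentially
  proof
    fix N
    obtain n t where "N \<le> n" "int n = 2 * 3 ^ t - m'" "max M 0 \<le> 3 ^ t"
      using peak_index_exists[of N m' "max M 0"] by blast
    moreover have "cantor_profile k' m' n = (1/2) ^ Suc k'"
      using calculation cantor_profile_at_peak[of n t m' m'] by simp
    ultimately show "\<exists>n\<ge>N. \<bar>a - (1/2) ^ Suc k'\<bar> \<le> dist (u n) (cantor_profile k' m' n)"
      using peak by (auto simp: dist_real_def)
  qed
  then show ?thesis
    using a by (intro exI[of _ "\<bar>a - (1/2) ^ Suc k'\<bar>"]) simp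
qed

lemma cantor_profiles_frequently_apart:
  assumes "u \<in> cantor_profiles" "v \<in> cantor_profiles" "u \<noteq> v"
  shows "\<exists>c>0. \<exists>\<^sub>F n in sequentially. c \<le> dist (u n) (v n)"
  using assms(1)
proof (cases rule: cantor_profilesE)
  case 1
  with assms(2,3) obtain k m where "v = cantor_profile k m"
    by (auto elim: cantor_profilesE)
  with 1 assms(3) show ?thesis
    using frequently_apart_from_cantor_profile by blast
next
  case (2 k m)
  show ?thesis
    using assms(2)
  proof (cases rule: cantor_profilesE)
    case 1
    then show ?thesis
      using 2 assms(3) frequently_apart_from_cantor_profile[where u = v and k' = k and m' = m]
      by (simp add: dist_commute)
  next
    case (2 k' m')
    then show ?thesis
    proof (cases "m \<le> m'")
      case True
      then show ?thesis
        using 2 \<open>u = cantor_profile k m\<close> assms(3) frequently_apart_from_cantor_profile by blast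
    next
      case False
      have "\<exists>c>0. \<exists>\<^sub>F n in sequentially. c \<le> dist (v n) (cantor_profile k m n)"
      proof (rule frequently_apart_from_cantor_profile)
        show "v = (\<lambda>_. 0) \<or> (\<exists>k'' m''. v = cantor_profile k'' m'' \<and> m'' \<le> m)"
          using 2 False by (intro disjI2 exI[of _ k'] exI[of _ m']) simp
        show "v \<noteq> cantor_profile k m"
          using \<open>u = cantor_profile k m\<close> assms(3) by simp
      qed
      then show ?thesis
        using \<open>u = cantor_profile k m\<close> by (simp add: dist_commute)
    qed
  qed
qed

lemma half_power_eq_if_within_factor_2:
  assumes "(1/2::real) ^ a < 2 * (1/2) ^ b" "(1/2::real) ^ b < 2 * (1/2) ^ a"
  shows "a = b"
proof (rule ccontr)
  have smaller: "(1/2::real) ^ y \<le> (1/2) ^ x / 2" if "x < y" for x y :: nat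
    using power_decreasing[of "Suc x" y "1/2::real"] that by simp
  assume "a \<noteq> b"
  then consider "a < b" | "b < a"
    by linarith
  then show False
    by cases (use assms smaller in fastforce)+
qed

lemma half_powers_tendsto:
  fixes w :: "nat \<Rightarrow> real"
  assumes lim: "w \<longlonglongrightarrow> v" and "v \<noteq> 0" and w: "\<And>j. w j = 0 \<or> (\<exists>a. w j = (1/2) ^ a)"
  shows "\<exists>a. v = (1/2) ^ a \<and> (\<forall>\<^sub>F j in sequentially. w j = v)"
proof -
  have "0 \<le> v"
    using w by (intro LIMSEQ_le_const[OF lim]) (metis order_refl zero_le_divide_1_iff zero_le_numeral zero_le_power)
  with \<open>v \<noteq> 0\<close> have "0 < v"
    by simp
  then have "\<forall>\<^sub>F j in sequentially. dist (w j) v < v / 3"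
    using lim \<open>0 < v\<close> by (intro tendstoD) simp_all
  then obtain N where N: "\<And>j. N \<le> j \<Longrightarrow> \<bar>w j - v\<bar> < v / 3"
    by (auto simp: eventually_sequentially dist_real_def)
  have power: "\<exists>a. w j = (1/2) ^ a \<and> 2 * v / 3 < w j \<and> w j < 4 * v / 3" if "N \<le> j" for j
  proof -
    have "2 * v / 3 < w j" "w j < 4 * v / 3"
      using N[OF that] unfolding abs_less_iff by linarith+
    then show ?thesis
      using w[of j] \<open>0 < v\<close> by auto
  qed
  have "w j = w N" if j: "N \<le> j" for j
  proof -
    obtain a b where a: "w j = (1/2) ^ a" and b: "w N = (1/2) ^ b"
      and "2 * v / 3 < w j" "w j < 4 * v / 3" "2 * v / 3 < w N" "w N < 4 * v / 3"
      using power[OF j] power[of N] by auto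
    then have "a = b"
      by (intro half_power_eq_if_within_factor_2; linarith)
    then show ?thesis
      using a b by simp
  qed
  then have "\<forall>\<^sub>F j in sequentially. w j = w N"
    unfolding eventually_sequentially by blast
  moreover from this have "v = w N"
    using LIMSEQ_unique[OF lim] tendsto_eventually by blast
  ultimately show ?thesis
    using power[of N] by auto
qed

lemma cantor_profile_zero_or_half_power:
  "cantor_profile k m i = 0 \<or> (\<exists>a. cantor_profile k m i = (1/2) ^ a)"
  using cantor_weight_zero_or_half_power[of "m + int i"]
  by (auto simp: cantor_profile_def power_add[symmetric])

lemma cantor_profile_le_weight: "cantor_profile k m i \<le> cantor_weight (m + int i)"
  unfolding cantor_profile_def
  by (rule mult_left_le_one_le) (simp_all add: cantor_weight_nonneg power_le_one)

lemma pointwise_limit_along_pattern: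
  assumes lim: "\<And>i. (\<lambda>j. cantor_profile (k j) (m j) i) \<longlonglongrightarrow> l i"
    and ev: "\<forall>\<^sub>F j in sequentially. cantor_profile (k j) (m j) i0 = v" and "v \<noteq> 0"
    and r: "strict_mono r" and pat: "pattern_limit (\<lambda>j. m (r j) + int i0) L"
  shows "l i = v / cantor_weight L * cantor_weight (L - int i0 + int i)"
proof -
  have "\<forall>\<^sub>F j in sequentially. cantor_profile (k (r j)) (m (r j)) i
      = v / cantor_weight L * cantor_weight (L - int i0 + int i)"
    using eventually_subseq[OF r ev] pat[unfolded pattern_limit_def, THEN conjunct2, THEN conjunct2,
        rule_format, of "int i - int i0"]
  proof eventually_elim
    case (elim j)
    define z where "z = m (r j) + int i0"
    have "cantor_weight z \<noteq> 0"
      using elim(1) \<open>v \<noteq> 0\<close> by (auto simp: z_def cantor_profile_def)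
    then have "cantor_profile (k (r j)) (m (r j)) i
        = cantor_profile (k (r j)) (m (r j)) i0 * (cantor_weight (z + (int i - int i0)) / cantor_weight z)"
      by (simp add: cantor_profile_def z_def)
    also have "\<dots> = v / cantor_weight L * cantor_weight (L - int i0 + int i)"
      using elim by (simp add: z_def algebra_simps)
    finally show ?case .
  qed
  then have "(\<lambda>j. cantor_profile (k (r j)) (m (r j)) i)
      \<longlonglongrightarrow> v / cantor_weight L * cantor_weight (L - int i0 + int i)"
    by (rule tendsto_eventually)
  moreover have "(\<lambda>j. cantor_profile (k (r j)) (m (r j)) i) \<longlonglongrightarrow> l i"
    using LIMSEQ_subseq_LIMSEQ[OF lim r] by (simp add: o_def)
  ultimately show ?thesis
    using LIMSEQ_unique by blast
qed

lemma pointwise_limit_of_cantor_profiles: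
  assumes lim: "\<And>i. (\<lambda>j. cantor_profile (k j) (m j) i) \<longlonglongrightarrow> l i" and nz: "l i0 \<noteq> 0"
  shows "l \<in> cantor_profiles"
proof -
  define v where "v = l i0"
  obtain a where a: "v = (1/2) ^ a"
    and ev: "\<forall>\<^sub>F j in sequentially. cantor_profile (k j) (m j) i0 = v"
    using half_powers_tendsto[OF lim[of i0] nz] cantor_profile_zero_or_half_power
    unfolding v_def by blast
  from ev have "\<forall>\<^sub>F j in sequentially. (1/2) ^ a \<le> cantor_weight (m j + int i0)"
    by eventually_elim (metis a cantor_profile_le_weight)
  then obtain r L where r: "strict_mono r" and pat: "pattern_limit (\<lambda>j. m (r j) + int i0) L"
    using pattern_limit_exists[of a "\<lambda>j. m j + int i0"] by (auto simp: o_def)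
  have l: "l i = v / cantor_weight L * cantor_weight (L - int i0 + int i)" for i
    using lim ev _ r pat by (rule pointwise_limit_along_pattern) (use nz v_def in simp)
  obtain b where b: "cantor_weight L = (1/2) ^ b"
    using cantor_weight_zero_or_half_power[of L] pat by (auto simp: pattern_limit_def)
  have "\<forall>\<^sub>F j in sequentially. cantor_weight (m (r j) + int i0) \<le> cantor_weight L"
    using pat by (simp add: pattern_limit_def)
  with eventually_subseq[OF r ev] have "\<forall>\<^sub>F j in sequentially. v \<le> cantor_weight L"
    by eventually_elim (metis cantor_profile_le_weight order_trans)
  then have "(1/2::real) ^ a \<le> (1/2) ^ b"
    by (simp add: a b eventually_const_iff)
  then have "b \<le> a"
    by (simp add: power_decreasing_iff)
  then have "v / cantor_weight L = (1/2) ^ (a - b)"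
    by (simp add: a b power_diff)
  then have "l = cantor_profile (a - b) (L - int i0)"
    by (simp add: fun_eq_iff l cantor_profile_def)
  then show ?thesis
    by simp
qed

lemma closed_cantor_profiles: "closed cantor_profiles"
  unfolding closed_sequential_limits
proof (intro allI impI, elim conjE)
  fix f l assume f: "\<forall>n. f n \<in> cantor_profiles" and lim: "f \<longlonglongrightarrow> l"
  show "l \<in> cantor_profiles"
  proof (cases "l = (\<lambda>_. 0)")
    case False
    then obtain i0 where i0: "l i0 \<noteq> 0"
      by auto
    have lim_i: "(\<lambda>j. f j i) \<longlonglongrightarrow> l i" for i
      using lim by (rule tendsto_fun_apply)
    have "\<forall>j. \<exists>km. f j \<noteq> (\<lambda>_. 0) \<longrightarrow> f j = cantor_profile (fst km) (snd km)"
      using f by (metis cantor_profilesE fst_conv snd_conv)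
    then obtain km where km: "\<And>j. f j \<noteq> (\<lambda>_. 0) \<Longrightarrow> f j = cantor_profile (fst (km j)) (snd (km j))"
      by (metis choice)
    have "\<forall>\<^sub>F j in sequentially. f j i0 \<noteq> 0"
      using lim_i i0 by (rule tendsto_imp_eventually_ne)
    then have ev: "\<forall>\<^sub>F j in sequentially. f j = cantor_profile (fst (km j)) (snd (km j))"
      by eventually_elim (intro km, auto)
    have "(\<lambda>j. cantor_profile (fst (km j)) (snd (km j)) i) \<longlonglongrightarrow> l i" for i
      by (rule Lim_transform_eventually[OF lim_i[of i]]) (use ev in \<open>auto elim: eventually_mono\<close>)
    then show ?thesis
      using i0 by (rule pointwise_limit_of_cantor_profiles)
  qed simp
qed

lemma compact_cantor_profiles: "compact cantor_profiles"
proof -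
  have "cantor_profiles = {u. \<forall>i. u i \<in> {0..1}} \<inter> cantor_profiles"
    using cantor_profiles_unit_interval by auto
  then show ?thesis
    using compact_Int_closed[OF compact_unit_cube closed_cantor_profiles] by simp
qed

section \<open>Transfer to the real line\<close>

lemma Metric_space_pullback:
  assumes "inj_on E X"
  shows "Metric_space X (\<lambda>x y. dist (E x) (E y))"
  using assms unfolding Metric_space_def
  by (auto simp: dist_commute dist_triangle inj_on_def)

lemma compact_space_pullback:
  assumes inj: "inj_on E X" and cpt: "compact (E ` X)"
  shows "compact_space (Metric_space.mtopology X (\<lambda>x y. dist (E x) (E y)))"
proof -
  interpret M: Metric_space X "\<lambda>x y. dist (E x) (E y)"
    using inj by (rule Metric_space_pullback)
  show ?thesis
    unfolding M.compact_space_sequentially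
  proof (intro allI impI)
    fix \<sigma> :: "nat \<Rightarrow> _" assume "range \<sigma> \<subseteq> X"
    then have "\<forall>n. (E \<circ> \<sigma>) n \<in> E ` X"
      by auto
    then obtain p r where "p \<in> E ` X" and r: "strict_mono r" and lim: "(E \<circ> \<sigma> \<circ> r) \<longlonglongrightarrow> p"
      using compact_imp_seq_compact[OF cpt] unfolding seq_compact_def by blast
    then obtain l where l: "l \<in> X" "p = E l"
      by blast
    have "limitin M.mtopology (\<sigma> \<circ> r) l sequentially"
      unfolding M.limit_metric_sequentially
    proof (intro conjI allI impI l(1))
      fix e :: real assume "0 < e"
      then obtain N where "\<forall>n\<ge>N. dist ((E \<circ> \<sigma> \<circ> r) n) p < e"
        using lim by (auto simp: LIMSEQ_def)
      moreover have "\<sigma> n \<in> X" for n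
        using \<open>range \<sigma> \<subseteq> X\<close> by auto
      ultimately show "\<exists>N. \<forall>n\<ge>N. (\<sigma> \<circ> r) n \<in> X \<and> dist (E ((\<sigma> \<circ> r) n)) (E l) < e"
        using l(2) by auto
    qed
    then show "\<exists>l r. l \<in> X \<and> strict_mono r \<and> limitin M.mtopology (\<sigma> \<circ> r) l sequentially"
      using l(1) r by blast
  qed
qed

lemma continuous_map_pullback:
  assumes inj: "inj_on E X" and T: "\<And>x. x \<in> X \<Longrightarrow> T x \<in> X \<and> E (T x) = S (E x)"
    and S: "continuous_on (E ` X) S"
  shows "continuous_map (Metric_space.mtopology X (\<lambda>x y. dist (E x) (E y)))
      (Metric_space.mtopology X (\<lambda>x y. dist (E x) (E y))) T"
proof -
  interpret M: Metric_space X "\<lambda>x y. dist (E x) (E y)"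
    using inj by (rule Metric_space_pullback)
  show ?thesis
    unfolding M.metric_continuous_map[OF M.Metric_space_axioms]
  proof (intro conjI ballI allI impI)
    show "T ` X \<subseteq> X"
      using T by blast
    fix a and e :: real assume a: "a \<in> X" and "0 < e"
    then obtain d where d: "0 < d" "\<forall>x\<in>E ` X. dist x (E a) < d \<longrightarrow> dist (S x) (S (E a)) < e"
      using S unfolding continuous_on_iff by blast
    show "\<exists>d>0. \<forall>x. x \<in> X \<and> dist (E a) (E x) < d \<longrightarrow> dist (E (T a)) (E (T x)) < e"
    proof (intro exI[of _ d] conjI allI impI)
      fix x assume x: "x \<in> X \<and> dist (E a) (E x) < d"
      then have "dist (E x) (E a) < d"
        by (simp add: dist_commute)
      with d(2) x have "dist (S (E x)) (S (E a)) < e"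
        by blast
      moreover have "E (T a) = S (E a)" "E (T x) = S (E x)"
        using T a x by auto
      ultimately show "dist (E (T a)) (E (T x)) < e"
        by (simp add: dist_commute)
    qed (rule d(1))
  qed
qed

lemma real_model_of_countable_system:
  fixes P :: "'a::metric_space set"
  assumes "countable P" "compact P" "P \<noteq> {}" "S ` P \<subseteq> P" "continuous_on P S"
  obtains X :: "real set" and E T where "bij_betw E X P"
    and "\<And>x. x \<in> X \<Longrightarrow> T x \<in> X \<and> E (T x) = S (E x)"
    and "tds X (\<lambda>x y. dist (E x) (E y)) T"
proof -
  define enc where "enc p = real (to_nat_on P p)" for p
  define E where "E x = from_nat_into P (nat \<lfloor>x\<rfloor>)" for x :: real
  define T where "T x = enc (S (E x))" for x
  have E_enc: "E (enc p) = p" if "p \<in> P" for p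
    using that assms(1) by (simp add: E_def enc_def)
  have bij: "bij_betw E (enc ` P) P"
    by (rule bij_betw_byWitness[where f' = enc]) (auto simp: E_enc)
  have T: "T x \<in> enc ` P \<and> E (T x) = S (E x)" if "x \<in> enc ` P" for x
    using that assms(4) by (auto simp: T_def E_enc)
  have "tds (enc ` P) (\<lambda>x y. dist (E x) (E y)) T"
    unfolding tds_def
  proof (intro conjI)
    show "enc ` P \<noteq> {}"
      using assms(3) by simp
    show "Metric_space (enc ` P) (\<lambda>x y. dist (E x) (E y))"
      using bij by (intro Metric_space_pullback) (rule bij_betw_imp_inj_on)
    show "compact_space (Metric_space.mtopology (enc ` P) (\<lambda>x y. dist (E x) (E y)))"
      using bij assms(2) by (intro compact_space_pullback) (simp_all add: bij_betw_def)
    show "continuous_map (Metric_space.mtopology (enc ` P) (\<lambda>x y. dist (E x) (E y)))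
        (Metric_space.mtopology (enc ` P) (\<lambda>x y. dist (E x) (E y))) T"
      using bij T assms(5) by (intro continuous_map_pullback) (simp_all add: bij_betw_def)
  qed
  with bij T show thesis
    by (rule that)
qed

lemma banach_scrambled_pullback:
  assumes bij: "bij_betw E X P" and T: "\<And>x. x \<in> X \<Longrightarrow> T x \<in> X \<and> E (T x) = S (E x)"
    and scr: "banach_scrambled dist S P"
  shows "banach_scrambled (\<lambda>x y. dist (E x) (E y)) T X"
  unfolding banach_scrambled_def
proof (intro conjI ballI impI)
  have inj: "inj_on E X" and img: "E ` X = P"
    using bij by (simp_all add: bij_betw_def)
  have two: "\<exists>p\<in>P. \<exists>q\<in>P. p \<noteq> q"
    and pairs: "\<And>p q. p \<in> P \<Longrightarrow> q \<in> P \<Longrightarrow> p \<noteq> q \<Longrightarrow>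
      banach_proximal dist S p q \<and> \<not> asymptotic dist S p q"
    using scr by (simp_all add: banach_scrambled_def)
  from two obtain p q where "p \<in> E ` X" "q \<in> E ` X" "p \<noteq> q"
    unfolding img by blast
  then obtain x y where "x \<in> X" "y \<in> X" "E x \<noteq> E y"
    by blast
  then show "\<exists>x\<in>X. \<exists>y\<in>X. x \<noteq> y"
    by (intro bexI[of _ x] bexI[of _ y]) auto
  have iter: "(T ^^ n) x \<in> X \<and> E ((T ^^ n) x) = (S ^^ n) (E x)" if "x \<in> X" for x n
  proof (induction n)
    case (Suc n)
    then show ?case
      using T[of "(T ^^ n) x"] by simp
  qed (simp add: that)
  fix x y assume xy: "x \<in> X" "y \<in> X" "x \<noteq> y"
  then have "E x \<in> P" "E y \<in> P" "E x \<noteq> E y"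
    using img inj by (auto dest: inj_onD)
  then have "banach_proximal dist S (E x) (E y)" "\<not> asymptotic dist S (E x) (E y)"
    using pairs by blast+
  then show "banach_proximal (\<lambda>x y. dist (E x) (E y)) T x y"
    and "\<not> asymptotic (\<lambda>x y. dist (E x) (E y)) T x y"
    using xy by (simp_all add: banach_proximal_def asymptotic_def iter)
qed

lemma banach_scrambled_cantor_profiles: "banach_scrambled dist shift cantor_profiles"
  unfolding banach_scrambled_def
proof (intro conjI ballI impI)
  have "cantor_profile 0 0 \<noteq> (\<lambda>_. 0)"
    by (auto simp: fun_eq_iff cantor_profile_def intro: exI[of _ 0])
  then show "\<exists>u\<in>cantor_profiles. \<exists>v\<in>cantor_profiles. u \<noteq> v"
    by (metis cantor_profile_in_profiles zero_in_cantor_profiles)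
  fix u v assume uv: "u \<in> cantor_profiles" "v \<in> cantor_profiles" "u \<noteq> v"
  show "banach_proximal dist shift u v"
    using uv by (intro banach_proximal_shift banach_density_zero_profile_support)
  show "\<not> asymptotic dist shift u v"
    using cantor_profiles_frequently_apart[OF uv] not_asymptotic_shift by blast
qed

theorem mainTheorem2:
  shows "\<exists>(X::real set) d T. tds X d T \<and> (\<exists>x\<in>X. \<exists>y\<in>X. x \<noteq> y) \<and> banach_scrambled d T X"
proof -
  have "cantor_profiles \<noteq> {}"
    using zero_in_cantor_profiles by blast
  then obtain X :: "real set" and E T where bij: "bij_betw E X cantor_profiles"
    and T: "\<And>x. x \<in> X \<Longrightarrow> T x \<in> X \<and> E (T x) = shift (E x)"
    and tds: "tds X (\<lambda>x y. dist (E x) (E y)) T"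
    by (rule real_model_of_countable_system[OF countable_cantor_profiles compact_cantor_profiles _
          shift_cantor_profiles continuous_on_shift]) blast
  have "banach_scrambled (\<lambda>x y. dist (E x) (E y)) T X"
    using bij T banach_scrambled_cantor_profiles by (rule banach_scrambled_pullback)
  with tds show ?thesis
    unfolding banach_scrambled_def by blast
qed

end
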